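(* Let $c>1$, $P\in[0,1]^{m\times p}$, $W\in\mathbb{R}^{m\times n}$, $U\in\mathbb{Z}_+^{n\times p}$, and for $\delta\in(0,1]$ let $\gamma_k:=12\log(2np/\delta)\max_{\ell\in[p]}\sqrt{1/U_{k\ell}}$ for $k\in[n]$. For any $\delta\in(0,1]$, any ranking $R\in\mathcal{R}$ satisfying $$\forall\ell\in[p],\ \forall k\in[n]:\ \sum_{i\in[m]}\sum_{j\in[k]}P_{i\ell}R_{ij}\le U_{k\ell}\Big(1+\Big(1-\frac1{2\sqrt c}\Big)\gamma_k\Big)$$ satisfies the $(c\gamma,\delta)$-constraint.
   Context: $\mathcal{R}$ is the set of rankings: matrices $R\in\{0,1\}^{m\times n}$ with $\sum_{j} R_{ij}\le 1$ for every item $i\in[m]$ and $\sum_{i} R_{ij}=1$ for every position $j\in[n]$. Noise model: the groups $G_1,\dots,G_p\subseteq[m]$ are random with $\Pr[i\in G_\ell]=P_{i\ell}$, and events concerning distinct items are independent. For $\varepsilon\in\mathbb{R}^n_{\ge0}$, a ranking $R$ satisfies the $(\varepsilon,\delta)$-constraint if with probability at least $1-\delta$ over the groups, $\sum_{i\in G_\ell}\sum_{j=1}^k R_{ij}\le U_{k\ell}(1+\varepsilon_k)$ for all $k\in[n],\ell\in[p]$. *)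

theory Defs
  imports "HOL-Probability.Probability"
begin

(* Conventions: items i \<in> {1..m}, positions j \<in> {1..n}, groups l \<in> {1..p} (1-based).
   A ranking is an m x n 0/1 matrix, given as a function R i j. *)

definition is_ranking :: "nat \<Rightarrow> nat \<Rightarrow> (nat \<Rightarrow> nat \<Rightarrow> real) \<Rightarrow> bool" where
  "is_ranking m n R \<longleftrightarrow>
     (\<forall>i\<in>{1..m}. \<forall>j\<in>{1..n}. R i j \<in> {0, 1}) \<and>
     (\<forall>i\<in>{1..m}. (\<Sum>j\<in>{1..n}. R i j) \<le> 1) \<and>
     (\<forall>j\<in>{1..n}. (\<Sum>i\<in>{1..m}. R i j) = 1)"

(* Noise model: item i independently draws the set D i of groups it belongs to
   (membership of one item in different groups may be arbitrarily correlated);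
   the marginals are Pr[i \<in> G_l] = P i l. *)
definition noise_model :: "nat \<Rightarrow> nat \<Rightarrow> (nat \<Rightarrow> nat \<Rightarrow> real) \<Rightarrow> (nat \<Rightarrow> nat set pmf) \<Rightarrow> bool" where
  "noise_model m p P D \<longleftrightarrow>
     (\<forall>i\<in>{1..m}. \<forall>l\<in>{1..p}. measure_pmf.prob (D i) {S. l \<in> S} = P i l)"

definition groups_dist :: "nat \<Rightarrow> (nat \<Rightarrow> nat set pmf) \<Rightarrow> (nat \<Rightarrow> nat set) pmf" where
  "groups_dist m D = Pi_pmf {1..m} {} D"

definition group_of :: "nat \<Rightarrow> (nat \<Rightarrow> nat set) \<Rightarrow> nat \<Rightarrow> nat set" where
  "group_of m \<omega> l = {i\<in>{1..m}. l \<in> \<omega> i}"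

definition satisfies_constraint ::
  "nat \<Rightarrow> nat \<Rightarrow> nat \<Rightarrow> (nat \<Rightarrow> nat \<Rightarrow> nat) \<Rightarrow> (nat \<Rightarrow> nat \<Rightarrow> real)
   \<Rightarrow> (nat \<Rightarrow> nat set pmf) \<Rightarrow> (nat \<Rightarrow> real) \<Rightarrow> real \<Rightarrow> bool" where
  "satisfies_constraint m n p U R D eps \<delta> \<longleftrightarrow>
     measure_pmf.prob (groups_dist m D)
       {\<omega>. \<forall>k\<in>{1..n}. \<forall>l\<in>{1..p}.
           (\<Sum>i\<in>group_of m \<omega> l. \<Sum>j\<in>{1..k}. R i j) \<le> real (U k l) * (1 + eps k)}
     \<ge> 1 - \<delta>"

definition gamma :: "nat \<Rightarrow> nat \<Rightarrow> (nat \<Rightarrow> nat \<Rightarrow> nat) \<Rightarrow> real \<Rightarrow> nat \<Rightarrow> real" where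
  "gamma n p U \<delta> k = 12 * ln (2 * real n * real p / \<delta>) * Max ((\<lambda>l. sqrt (1 / real (U k l))) ` {1..p})"

end

theory Submission
  imports Defs
begin

(* For fixed k and l, the load of group l in the top k positions is a sum of independent
   indicators: item i contributes its 0/1 prefix weight with probability P i l, so the mean
   load is at most U (1 + (1 - 1/(2 sqrt c)) gamma_k).  The threshold U (1 + c gamma_k) lies
   U h above this, where h = (c - 1 + 1/(2 sqrt c)) gamma_k >= gamma_k / 2, and the Chernoff
   bound with parameter h/(2(1+h)) bounds the tail by exp (-U h^2/(4(1+h))).  The factor 12
   in gamma_k makes this exponent at least ln (2np/delta), and a union bound over the n p
   pairs (k, l) concludes. *)

definition group_load :: "nat \<Rightarrow> (nat \<Rightarrow> nat \<Rightarrow> real) \<Rightarrow> (nat \<Rightarrow> nat set) \<Rightarrow> nat \<Rightarrow> nat \<Rightarrow> real" where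
  "group_load m R \<omega> k l = (\<Sum>i\<in>group_of m \<omega> l. \<Sum>j\<in>{1..k}. R i j)"

definition expected_group_load :: "nat \<Rightarrow> (nat \<Rightarrow> nat \<Rightarrow> real) \<Rightarrow> (nat \<Rightarrow> nat \<Rightarrow> real) \<Rightarrow> nat \<Rightarrow> nat \<Rightarrow> real" where
  "expected_group_load m P R k l = (\<Sum>i\<in>{1..m}. \<Sum>j\<in>{1..k}. P i l * R i j)"

lemma expectation_exp_indicator:
  fixes p :: "'a pmf" and E :: "'a set" and s :: real
  shows "measure_pmf.expectation p (\<lambda>x. exp (s * indicator E x))
           = 1 + (exp s - 1) * measure_pmf.prob p E"
proof -
  have "(\<lambda>x. exp (s * indicator E x)) = (\<lambda>x. 1 + (exp s - 1) * indicator E x)"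
    by (auto simp: fun_eq_iff indicator_def)
  then show ?thesis
    by (simp add: measure_pmf.integrable_const_bound[where B=1])
qed

lemma Pi_pmf_indicator_sum_tail_le:
  fixes D :: "'i \<Rightarrow> 'a pmf" and E :: "'i \<Rightarrow> 'a set" and s x :: real
  assumes fin: "finite A" and s: "0 \<le> s"
  shows "measure_pmf.prob (Pi_pmf A dflt D) {\<omega>. x < (\<Sum>i\<in>A. indicator (E i) (\<omega> i))}
           \<le> exp ((\<Sum>i\<in>A. measure_pmf.prob (D i) (E i)) * (exp s - 1) - s * x)"
proof -
  define f where "f i y = exp (s * indicator (E i) y)" for i y
  define q where "q i = measure_pmf.prob (D i) (E i)" for i
  let ?Q = "Pi_pmf A dflt D"
  have integrable: "integrable (measure_pmf (D i)) (\<lambda>y. exp (s * indicator (E i) y))" for i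
    using s by (intro measure_pmf.integrable_const_bound[where B="exp s"])
      (auto simp: indicator_def)
  have "measure_pmf.prob ?Q {\<omega>. x < (\<Sum>i\<in>A. indicator (E i) (\<omega> i))}
      \<le> measure_pmf.prob ?Q {\<omega>\<in>space ?Q. exp (s * x) \<le> (\<Prod>i\<in>A. f i (\<omega> i))}"
    using s by (intro measure_pmf.finite_measure_mono)
      (auto simp: f_def exp_sum[OF fin, symmetric] sum_distrib_left[symmetric] mult_left_mono)
  also have "\<dots> \<le> measure_pmf.expectation ?Q (\<lambda>\<omega>. \<Prod>i\<in>A. f i (\<omega> i)) / exp (s * x)"
    by (rule integral_Markov_inequality_measure[where A="{}"])
      (auto intro!: integrable_prod_Pi_pmf fin integrable prod_nonneg simp: f_def)
  also have "measure_pmf.expectation ?Q (\<lambda>\<omega>. \<Prod>i\<in>A. f i (\<omega> i)) = (\<Prod>i\<in>A. 1 + (exp s - 1) * q i)"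
    unfolding f_def q_def
    by (subst expectation_prod_Pi_pmf) (auto simp: fin integrable expectation_exp_indicator)
  also have "\<dots> \<le> (\<Prod>i\<in>A. exp (q i * (exp s - 1)))"
    using s by (intro prod_mono) (auto simp: q_def mult.commute)
  also have "\<dots> = exp ((\<Sum>i\<in>A. q i) * (exp s - 1))"
    by (simp add: exp_sum[OF fin] sum_distrib_right)
  finally show ?thesis
    by (simp add: q_def exp_diff divide_right_mono)
qed

lemma chernoff_exponent_le:
  fixes u h M x :: real
  assumes h: "0 < h" and M: "0 \<le> M" "M \<le> u * (1 + h)" and x: "M + u * h \<le> x"
  shows "M * (exp (h / (2 * (1 + h))) - 1) - h / (2 * (1 + h)) * x \<le> - (u * h\<^sup>2 / (4 * (1 + h)))"
proof -
  define s where "s = h / (2 * (1 + h))"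
  have s: "0 \<le> s" "s \<le> 1" using h by (auto simp: s_def field_simps)
  have "M * (exp s - 1) \<le> M * (s + s\<^sup>2)"
    using exp_bound[OF s] M by (intro mult_left_mono) auto
  then have "M * (exp s - 1) - s * x \<le> - s * (x - M) + M * s\<^sup>2"
    by (simp add: algebra_simps)
  also have "\<dots> \<le> - s * (u * h) + u * (1 + h) * s\<^sup>2"
    using s M x by (intro add_mono mult_right_mono) (auto intro: mult_left_mono)
  also have "\<dots> = - (u * h\<^sup>2 / (4 * (1 + h)))"
    using h by (simp add: s_def power2_eq_square divide_simps) (simp add: algebra_simps)
  finally show ?thesis by (simp add: s_def)
qed

lemma tail_exponent_ge:
  fixes u h L :: real
  assumes u: "1 \<le> u" and h: "0 < h" and L: "1/3 \<le> L" and gap: "6 * L \<le> sqrt u * h"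
  shows "L \<le> u * h\<^sup>2 / (4 * (1 + h))"
proof -
  define t where "t = sqrt u * h"
  have "h \<le> t" using u h by (simp add: t_def mult_le_cancel_right1)
  have "6 * L * (2 * L) \<le> t * (t - 4 * L)"
    using gap L by (intro mult_mono) (auto simp: t_def)
  moreover have "4 * L \<le> 12 * L\<^sup>2" using L by (simp add: power2_eq_square)
  moreover have "4 * L * h \<le> 4 * L * t" using \<open>h \<le> t\<close> L by simp
  ultimately have "4 * L * (1 + h) \<le> t\<^sup>2"
    by (simp add: power2_eq_square algebra_simps)
  also have "t\<^sup>2 = u * h\<^sup>2" using u by (simp add: t_def power_mult_distrib)
  finally show ?thesis using h by (simp add: field_simps)
qed

lemma slack_factor_bounds:
  fixes y :: real
  assumes y: "1 \<le> y"
  shows "1 - 1 / (2 * y) \<le> y\<^sup>2 - (1 - 1 / (2 * y))" and "1 / 2 \<le> y\<^sup>2 - (1 - 1 / (2 * y))"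
proof -
  have "0 \<le> (2 * y - 1) * (y - 1)" using y by simp
  then have key: "3 / 2 \<le> y + 1 / (2 * y)" using y by (simp add: field_simps algebra_simps)
  have "2 * y - 1 \<le> y\<^sup>2" using zero_le_power2[of "y - 1"] by (simp add: power2_diff)
  then show "1 - 1 / (2 * y) \<le> y\<^sup>2 - (1 - 1 / (2 * y))" using key by linarith
  have "y \<le> y\<^sup>2" using y by (simp add: power2_eq_square)
  then show "1 / 2 \<le> y\<^sup>2 - (1 - 1 / (2 * y))" using key by linarith
qed

lemma ln_ratio_ge_two_thirds:
  fixes \<delta> :: real
  assumes "1 \<le> n" "1 \<le> p" "0 < \<delta>" "\<delta> \<le> 1"
  shows "2 / 3 \<le> ln (2 * real n * real p / \<delta>)"
proof -
  have "1 * 1 \<le> real n * real p" using assms by (intro mult_mono) auto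
  then have "2 \<le> 2 * real n * real p / \<delta>" using assms by (simp add: field_simps)
  then show ?thesis using ln2_ge_two_thirds by (smt (verit) ln_le_cancel_iff)
qed

lemma gamma_ge_ln_div_sqrt:
  assumes "l \<in> {1..p}" and "0 \<le> ln (2 * real n * real p / \<delta>)"
  shows "12 * ln (2 * real n * real p / \<delta>) / sqrt (real (U k l)) \<le> gamma n p U \<delta> k"
proof -
  have "sqrt (1 / real (U k l)) \<le> Max ((\<lambda>l. sqrt (1 / real (U k l))) ` {1..p})"
    using assms(1) by (intro Max_ge) auto
  then have "12 * ln (2 * real n * real p / \<delta>) * sqrt (1 / real (U k l)) \<le> gamma n p U \<delta> k"
    unfolding gamma_def using assms(2) by (intro mult_left_mono) auto
  then show ?thesis by (simp add: real_sqrt_divide)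
qed

lemma gamma_tail_exponent_bounds:
  fixes c \<delta> :: real
  assumes c: "1 < c" and \<delta>: "0 < \<delta>" "\<delta> \<le> 1" and k: "k \<in> {1..n}" and l: "l \<in> {1..p}"
    and U: "1 \<le> U k l"
  defines "a \<equiv> 1 - 1 / (2 * sqrt c)"
  defines "h \<equiv> (c - a) * gamma n p U \<delta> k"
  shows "0 < h" and "a * gamma n p U \<delta> k \<le> h"
    and "ln (2 * real n * real p / \<delta>) \<le> real (U k l) * h\<^sup>2 / (4 * (1 + h))"
proof -
  define L where "L = ln (2 * real n * real p / \<delta>)"
  have slack: "a \<le> c - a" "1 / 2 \<le> c - a"
    using slack_factor_bounds[of "sqrt c"] c by (simp_all add: a_def)
  have L: "2 / 3 \<le> L" unfolding L_def using k l \<delta> by (intro ln_ratio_ge_two_thirds) auto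
  have sqrtU: "1 \<le> sqrt (real (U k l))" using U by simp
  have gamma: "12 * L / sqrt (real (U k l)) \<le> gamma n p U \<delta> k"
    using l L unfolding L_def by (intro gamma_ge_ln_div_sqrt) auto
  moreover have "0 < 12 * L / sqrt (real (U k l))" using L sqrtU by simp
  ultimately have gamma_pos: "0 < gamma n p U \<delta> k" by linarith
  then show "0 < h" using slack by (simp add: h_def)
  show "a * gamma n p U \<delta> k \<le> h" using slack gamma_pos by (simp add: h_def)
  have "6 * L \<le> sqrt (real (U k l)) * (gamma n p U \<delta> k / 2)"
    using gamma sqrtU by (simp add: field_simps)
  also have "\<dots> \<le> sqrt (real (U k l)) * h"
    using slack gamma_pos by (intro mult_left_mono) (auto simp: h_def)
  finally show "ln (2 * real n * real p / \<delta>) \<le> real (U k l) * h\<^sup>2 / (4 * (1 + h))"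
    using U L \<open>0 < h\<close> unfolding L_def[symmetric] by (intro tail_exponent_ge) auto
qed

lemma is_ranking_prefix_sum_01:
  assumes rk: "is_ranking m n R" and i: "i \<in> {1..m}" and k: "k \<le> n"
  shows "(\<Sum>j\<in>{1..k}. R i j) \<in> {0, 1}"
proof -
  have R01: "\<forall>j\<in>{1..n}. R i j \<in> {0, 1}" and row: "(\<Sum>j\<in>{1..n}. R i j) \<le> 1"
    using rk i unfolding is_ranking_def by auto
  have card: "(\<Sum>j\<in>{1..k}. R i j) = real (card {j\<in>{1..k}. R i j = 1})"
  proof -
    have "(\<Sum>j\<in>{1..k}. R i j) = (\<Sum>j\<in>{1..k}. if R i j = 1 then 1 else 0)"
      using R01 k by (intro sum.cong) auto
    then show ?thesis by (simp add: sum.If_cases Int_def)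
  qed
  have "0 \<le> R i j" if "j \<in> {1..n}" for j using R01 that by fastforce
  then have "(\<Sum>j\<in>{1..k}. R i j) \<le> (\<Sum>j\<in>{1..n}. R i j)"
    using k by (intro sum_mono2) auto
  then have "card {j\<in>{1..k}. R i j = 1} \<le> 1" using row card by linarith
  then show ?thesis using card by (auto simp: le_Suc_eq)
qed

lemma group_load_tail_le:
  fixes u h t :: real
  assumes rk: "is_ranking m n R" and nm: "noise_model m p P D" and k: "k \<le> n"
    and l: "l \<in> {1..p}" and h: "0 < h"
    and mean: "expected_group_load m P R k l \<le> u * (1 + h)"
    and t: "expected_group_load m P R k l + u * h \<le> t"
  shows "measure_pmf.prob (groups_dist m D) {\<omega>. t < group_load m R \<omega> k l}
           \<le> exp (- (u * h\<^sup>2 / (4 * (1 + h))))"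
proof -
  define a where "a i = (\<Sum>j\<in>{1..k}. R i j)" for i
  define E where "E i = (if a i = 1 then {S. l \<in> S} else {})" for i
  have a01: "a i \<in> {0, 1}" if "i \<in> {1..m}" for i
    unfolding a_def using is_ranking_prefix_sum_01[OF rk that k] .
  have load: "group_load m R \<omega> k l = (\<Sum>i\<in>{1..m}. indicator (E i) (\<omega> i))" for \<omega>
  proof -
    have "group_load m R \<omega> k l = (\<Sum>i\<in>{1..m}. if l \<in> \<omega> i then a i else 0)"
      unfolding group_load_def group_of_def a_def by (rule sum.inter_filter) simp
    also have "\<dots> = (\<Sum>i\<in>{1..m}. indicator (E i) (\<omega> i))"
      using a01 by (intro sum.cong) (auto simp: E_def)
    finally show ?thesis .
  qed
  have expected_load: "expected_group_load m P R k l = (\<Sum>i\<in>{1..m}. measure_pmf.prob (D i) (E i))"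
    unfolding expected_group_load_def
  proof (intro sum.cong refl)
    fix i assume i: "i \<in> {1..m}"
    have "(\<Sum>j\<in>{1..k}. P i l * R i j) = P i l * a i" by (simp add: a_def sum_distrib_left)
    also have "\<dots> = measure_pmf.prob (D i) (E i)"
      using a01[OF i] nm i l by (auto simp: E_def noise_model_def)
    finally show "(\<Sum>j\<in>{1..k}. P i l * R i j) = measure_pmf.prob (D i) (E i)" .
  qed
  define s where "s = h / (2 * (1 + h))"
  have "measure_pmf.prob (groups_dist m D) {\<omega>. t < group_load m R \<omega> k l}
      = measure_pmf.prob (Pi_pmf {1..m} {} D) {\<omega>. t < (\<Sum>i\<in>{1..m}. indicator (E i) (\<omega> i))}"
    by (simp add: groups_dist_def load)
  also have "\<dots> \<le> exp (expected_group_load m P R k l * (exp s - 1) - s * t)"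
    unfolding expected_load using h by (intro Pi_pmf_indicator_sum_tail_le) (auto simp: s_def)
  also have "\<dots> \<le> exp (- (u * h\<^sup>2 / (4 * (1 + h))))"
    using chernoff_exponent_le[OF h _ mean t] by (simp add: s_def expected_load sum_nonneg)
  finally show ?thesis .
qed

lemma satisfies_constraint_union_bound:
  fixes \<delta> :: real
  assumes \<delta>: "0 \<le> \<delta>"
    and tail: "\<And>k l. k \<in> {1..n} \<Longrightarrow> l \<in> {1..p} \<Longrightarrow>
      measure_pmf.prob (groups_dist m D) {\<omega>. real (U k l) * (1 + eps k) < group_load m R \<omega> k l}
        \<le> \<delta> / (real n * real p)"
  shows "satisfies_constraint m n p U R D eps \<delta>"
proof -
  define B where "B = (\<lambda>(k, l). {\<omega>. real (U k l) * (1 + eps k) < group_load m R \<omega> k l})"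
  let ?G = "groups_dist m D" and ?I = "{1..n} \<times> {1..p}"
  have "measure_pmf.prob ?G (\<Union>(B ` ?I)) \<le> (\<Sum>kl\<in>?I. measure_pmf.prob ?G (B kl))"
    by (rule measure_pmf.finite_measure_subadditive_finite) auto
  also have "\<dots> \<le> (\<Sum>kl\<in>?I. \<delta> / (real n * real p))"
    by (intro sum_mono) (auto simp: B_def tail)
  also have "\<dots> \<le> \<delta>"
    using \<delta> by (cases "n = 0 \<or> p = 0") auto
  finally have bad: "measure_pmf.prob ?G (\<Union>(B ` ?I)) \<le> \<delta>" .
  have good: "{\<omega>. \<forall>k\<in>{1..n}. \<forall>l\<in>{1..p}.
          (\<Sum>i\<in>group_of m \<omega> l. \<Sum>j\<in>{1..k}. R i j) \<le> real (U k l) * (1 + eps k)}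
      = space ?G - \<Union>(B ` ?I)"
    unfolding B_def group_load_def by (auto simp: not_less) (meson atLeastAtMost_iff leD)
  show ?thesis
    using bad unfolding satisfies_constraint_def good by (subst measure_pmf.prob_compl) auto
qed

theorem proposition6p1:
  fixes m n p :: nat and c \<delta> :: real
    and P :: "nat \<Rightarrow> nat \<Rightarrow> real" and U :: "nat \<Rightarrow> nat \<Rightarrow> nat"
    and R :: "nat \<Rightarrow> nat \<Rightarrow> real" and D :: "nat \<Rightarrow> nat set pmf"
  assumes "c > 1"
    and "\<forall>i\<in>{1..m}. \<forall>l\<in>{1..p}. 0 \<le> P i l \<and> P i l \<le> 1"
    and "\<forall>k\<in>{1..n}. \<forall>l\<in>{1..p}. U k l \<ge> 1"
    and "0 < \<delta>" and "\<delta> \<le> 1"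
    and "noise_model m p P D"
    and "is_ranking m n R"
    and "\<forall>l\<in>{1..p}. \<forall>k\<in>{1..n}.
           (\<Sum>i\<in>{1..m}. \<Sum>j\<in>{1..k}. P i l * R i j)
             \<le> real (U k l) * (1 + (1 - 1 / (2 * sqrt c)) * gamma n p U \<delta> k)"
  shows "satisfies_constraint m n p U R D (\<lambda>k. c * gamma n p U \<delta> k) \<delta>"
proof (rule satisfies_constraint_union_bound)
  fix k l assume k: "k \<in> {1..n}" and l: "l \<in> {1..p}"
  define a where "a = 1 - 1 / (2 * sqrt c)"
  define h where "h = (c - a) * gamma n p U \<delta> k"
  have U: "1 \<le> U k l" using assms(3) k l by auto
  note exponent = gamma_tail_exponent_bounds[where U = U, OF assms(1,4,5) k l U, folded a_def h_def]
  have mean: "expected_group_load m P R k l \<le> real (U k l) * (1 + a * gamma n p U \<delta> k)"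
    using assms(8) k l by (simp add: expected_group_load_def a_def)
  have "measure_pmf.prob (groups_dist m D)
          {\<omega>. real (U k l) * (1 + c * gamma n p U \<delta> k) < group_load m R \<omega> k l}
      \<le> exp (- (real (U k l) * h\<^sup>2 / (4 * (1 + h))))"
  proof (rule group_load_tail_le[OF assms(7,6) _ l exponent(1)])
    show "k \<le> n" using k by simp
    show "expected_group_load m P R k l \<le> real (U k l) * (1 + h)"
      using mean exponent(2) mult_left_mono[of "1 + a * gamma n p U \<delta> k" "1 + h" "real (U k l)"]
      by simp
    show "expected_group_load m P R k l + real (U k l) * h \<le> real (U k l) * (1 + c * gamma n p U \<delta> k)"
      using mean by (simp add: h_def algebra_simps)
  qed
  also have "\<dots> \<le> exp (- ln (2 * real n * real p / \<delta>))" using exponent(3) by simp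
  also have "\<dots> = \<delta> / (2 * real n * real p)" using k l assms(4) by (simp add: exp_minus)
  also have "\<dots> \<le> \<delta> / (real n * real p)" using k l assms(4) by (simp add: frac_le)
  finally show "measure_pmf.prob (groups_dist m D)
      {\<omega>. real (U k l) * (1 + c * gamma n p U \<delta> k) < group_load m R \<omega> k l} \<le> \<delta> / (real n * real p)" .
qed (use assms(4) in simp)

end
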